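(* Let $A$ be a compact convex set, $B$ a zonoid and $C$ a compact set in $\mathbb{R}^n$. Then $|A+B+C|+|A|\ge|A+B|+|A+C|$.
   Context: $|\cdot|$ is $n$-dimensional Lebesgue measure and $+$ is Minkowski addition. A zonotope is a Minkowski sum of finitely many line segments; a zonoid is a limit of zonotopes in the Hausdorff metric. *)

theory Defs
  imports "HOL-Analysis.Analysis" "HOL-Library.Set_Algebras"
begin

definition zonotope :: "'a::euclidean_space set \<Rightarrow> bool" where
  "zonotope Z \<longleftrightarrow> (\<exists>(k::nat) (a::nat \<Rightarrow> 'a) b.
      Z = {(\<Sum>i<k. x i) | x. \<forall>i<k. x i \<in> closed_segment (a i) (b i)})"

text \<open>Hausdorff distance of (nonempty bounded) sets.\<close>
definition hausdorff_dist :: "'a::euclidean_space set \<Rightarrow> 'a set \<Rightarrow> real" where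
  "hausdorff_dist S T = max (SUP x\<in>S. infdist x T) (SUP y\<in>T. infdist y S)"

definition zonoid :: "'a::euclidean_space set \<Rightarrow> bool" where
  "zonoid Z \<longleftrightarrow> compact Z \<and> Z \<noteq> {} \<and>
     (\<exists>P :: nat \<Rightarrow> 'a set. (\<forall>k. zonotope (P k)) \<and>
        (\<lambda>k. hausdorff_dist (P k) Z) \<longlonglongrightarrow> 0)"

end

theory Submission
  imports Defs "HOL-Library.Interval"
begin

(* For a single segment B = [0, u] the inequality follows by Fubini along the lines parallel
   to u from its one-dimensional version: if A is an interval inside a compact set K of reals,
   then A + [0, t] is longer than A by exactly t, while K + [0, t] is longer than K by at least t.
   Translating C so that it contains 0 gives A \<subseteq> A + C =: K, and the sections of A and K by a
   line are such an interval and compact set. Since A + [0, u] is again compact and convex, induction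
   on the number of segments gives the inequality for zonotopes B. A zonoid B is a Hausdorff
   limit of zonotopes P; enlarging A and A + B + C by small balls absorbs the error, and the
   volumes of these parallel bodies converge to |A| and |A + B + C|. *)

section \<open>Cavalieri's principle along a line\<close>

lemma inner_Basis_split_coordinate:
  fixes b :: "'a::euclidean_space"
  assumes "b \<in> Basis" "i \<in> Basis"
  shows "((\<Sum>j\<in>Basis - {b}. x j *\<^sub>R j) + s *\<^sub>R b) \<bullet> i = (if i = b then s else x i)"
  using assms by (auto simp: inner_add_left inner_sum_left inner_Basis if_distrib[of "(*) _"] cong: if_cong)

lemma nn_integral_lborel_split_coordinate:
  fixes b :: "'a::euclidean_space" and g :: "'a \<Rightarrow> ennreal"
  defines "I \<equiv> Basis - {b}"
  assumes b: "b \<in> Basis" and [measurable]: "g \<in> borel_measurable borel"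
  shows "(\<integral>\<^sup>+z. g z \<partial>lborel) =
      (\<integral>\<^sup>+x. (\<integral>\<^sup>+s. g ((\<Sum>i\<in>I. x i *\<^sub>R i) + s *\<^sub>R b) \<partial>lborel) \<partial>(\<Pi>\<^sub>M i\<in>I. lborel))"
    and "(\<integral>\<^sup>+z. g z \<partial>lborel) =
      (\<integral>\<^sup>+s. (\<integral>\<^sup>+x. g ((\<Sum>i\<in>I. x i *\<^sub>R i) + s *\<^sub>R b) \<partial>(\<Pi>\<^sub>M i\<in>I. lborel)) \<partial>lborel)"
proof -
  interpret product_sigma_finite "\<lambda>_::'a. lborel::real measure" ..
  have BI: "Basis = insert b I" "finite I" "b \<notin> I"
    using b by (auto simp: I_def)
  have coords: "(\<Sum>j\<in>insert b I. (x(b := s)) j *\<^sub>R j) = (\<Sum>i\<in>I. x i *\<^sub>R i) + s *\<^sub>R b"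
    for x :: "'a \<Rightarrow> real" and s
    using BI(2,3) by (simp add: add.commute) (auto intro!: sum.cong)
  have gm: "(\<lambda>f. g (\<Sum>j\<in>insert b I. f j *\<^sub>R j)) \<in> borel_measurable (\<Pi>\<^sub>M j\<in>insert b I. lborel)"
    by measurable
  have lborel_PiM: "(\<integral>\<^sup>+z. g z \<partial>lborel) = (\<integral>\<^sup>+f. g (\<Sum>j\<in>insert b I. f j *\<^sub>R j) \<partial>(\<Pi>\<^sub>M j\<in>insert b I. lborel))"
    by (subst lborel_eq) (simp add: nn_integral_distr BI(1)[symmetric])
  show "(\<integral>\<^sup>+z. g z \<partial>lborel) =
      (\<integral>\<^sup>+x. (\<integral>\<^sup>+s. g ((\<Sum>i\<in>I. x i *\<^sub>R i) + s *\<^sub>R b) \<partial>lborel) \<partial>(\<Pi>\<^sub>M i\<in>I. lborel))"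
    unfolding lborel_PiM product_nn_integral_insert[OF BI(2,3) gm] coords ..
  show "(\<integral>\<^sup>+z. g z \<partial>lborel) =
      (\<integral>\<^sup>+s. (\<integral>\<^sup>+x. g ((\<Sum>i\<in>I. x i *\<^sub>R i) + s *\<^sub>R b) \<partial>(\<Pi>\<^sub>M i\<in>I. lborel)) \<partial>lborel)"
    unfolding lborel_PiM product_nn_integral_insert_rev[OF BI(2,3) gm] coords ..
qed

lemma lborel_distr_shear:
  fixes b w :: "'a::euclidean_space"
  assumes b: "b \<in> Basis" and wb: "w \<bullet> b = 0"
  shows "distr lborel borel (\<lambda>z. z + (z \<bullet> b) *\<^sub>R w) = lborel"
proof (rule lborel_eqI[symmetric])
  fix l u :: 'a
  assume le: "\<And>i. i \<in> Basis \<Longrightarrow> l \<bullet> i \<le> u \<bullet> i"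
  interpret product_sigma_finite "\<lambda>_::'a. lborel::real measure" ..
  define I where "I = Basis - {b}"
  define N where "N = (\<lambda>z::'a. z + (z \<bullet> b) *\<^sub>R w)"
  define J where "J s i = {l \<bullet> i - s * (w \<bullet> i) <..< u \<bullet> i - s * (w \<bullet> i)}" for s i
  have BI: "Basis = insert b I" "finite I" "b \<notin> I"
    using b by (auto simp: I_def)
  have N_measurable[measurable]: "N \<in> borel_measurable borel"
    unfolding N_def by measurable
  have N_inner: "N z \<bullet> i = z \<bullet> i + (z \<bullet> b) * (w \<bullet> i)" for z i
    by (simp add: N_def inner_add_left)
  have z_coord: "((\<Sum>j\<in>I. x j *\<^sub>R j) + s *\<^sub>R b) \<bullet> b = s"
    "i \<in> I \<Longrightarrow> ((\<Sum>j\<in>I. x j *\<^sub>R j) + s *\<^sub>R b) \<bullet> i = x i" for x s i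
    using inner_Basis_split_coordinate[OF b b, of x s] inner_Basis_split_coordinate[OF b, of i x s]
    by (auto simp: I_def)
  have N_coord: "N ((\<Sum>j\<in>I. x j *\<^sub>R j) + s *\<^sub>R b) \<bullet> b = s"
    "i \<in> I \<Longrightarrow> N ((\<Sum>j\<in>I. x j *\<^sub>R j) + s *\<^sub>R b) \<bullet> i = x i + s * (w \<bullet> i)" for x s i
    by (simp_all only: N_inner z_coord wb mult_zero_right add_0_right)
  have slice: "indicator (N -` box l u) ((\<Sum>j\<in>I. x j *\<^sub>R j) + s *\<^sub>R b)
      = indicator {l \<bullet> b <..< u \<bullet> b} s * (indicator (Pi\<^sub>E I (J s)) x :: ennreal)"
    if "x \<in> extensional I" for x s
  proof -
    have "N ((\<Sum>j\<in>I. x j *\<^sub>R j) + s *\<^sub>R b) \<in> box l u \<longleftrightarrow>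
        s \<in> {l \<bullet> b <..< u \<bullet> b} \<and> (\<forall>i\<in>I. x i \<in> J s i)"
      unfolding mem_box BI(1) using BI(3) by (simp add: N_coord J_def less_diff_eq diff_less_eq)
    then show ?thesis
      using that by (simp add: indicator_def PiE_iff)
  qed
  have Nbox: "N -` box l u \<in> sets borel"
    by (rule measurable_sets_borel[of N borel]) auto
  then have "emeasure (distr lborel borel N) (box l u) = (\<integral>\<^sup>+z. indicator (N -` box l u) z \<partial>lborel)"
    by (simp add: emeasure_distr)
  also have "\<dots> = (\<integral>\<^sup>+s. (\<integral>\<^sup>+x. indicator (N -` box l u) ((\<Sum>j\<in>I. x j *\<^sub>R j) + s *\<^sub>R b)
      \<partial>(\<Pi>\<^sub>M i\<in>I. lborel)) \<partial>lborel)"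
    unfolding I_def using Nbox by (intro nn_integral_lborel_split_coordinate(2)[OF b]) simp
  also have "\<dots> = (\<integral>\<^sup>+s. (\<integral>\<^sup>+x. indicator {l \<bullet> b <..< u \<bullet> b} s * indicator (Pi\<^sub>E I (J s)) x
      \<partial>(\<Pi>\<^sub>M i\<in>I. lborel)) \<partial>lborel)"
    by (intro nn_integral_cong) (simp add: slice space_PiM PiE_def)
  also have "\<dots> = (\<integral>\<^sup>+s. indicator {l \<bullet> b <..< u \<bullet> b} s * (\<Prod>i\<in>I. ennreal ((u - l) \<bullet> i)) \<partial>lborel)"
  proof (intro nn_integral_cong)
    fix s
    have "(\<integral>\<^sup>+x. indicator {l \<bullet> b <..< u \<bullet> b} s * indicator (Pi\<^sub>E I (J s)) x \<partial>(\<Pi>\<^sub>M i\<in>I. lborel))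
        = indicator {l \<bullet> b <..< u \<bullet> b} s * emeasure (\<Pi>\<^sub>M i\<in>I. lborel) (Pi\<^sub>E I (J s))"
      using BI(2) by (intro nn_integral_cmult_indicator) (auto intro!: sets_PiM_I_finite simp: J_def)
    also have "emeasure (\<Pi>\<^sub>M i\<in>I. lborel) (Pi\<^sub>E I (J s)) = (\<Prod>i\<in>I. emeasure lborel (J s i))"
      using BI(2) by (intro emeasure_PiM) (auto simp: J_def)
    also have "\<dots> = (\<Prod>i\<in>I. ennreal ((u - l) \<bullet> i))"
      using le by (intro prod.cong) (auto simp: J_def BI(1) inner_diff_left)
    finally show "(\<integral>\<^sup>+x. indicator {l \<bullet> b <..< u \<bullet> b} s * indicator (Pi\<^sub>E I (J s)) x \<partial>(\<Pi>\<^sub>M i\<in>I. lborel))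
        = indicator {l \<bullet> b <..< u \<bullet> b} s * (\<Prod>i\<in>I. ennreal ((u - l) \<bullet> i))" .
  qed
  also have "\<dots> = (\<Prod>i\<in>Basis. ennreal ((u - l) \<bullet> i))"
    unfolding BI(1) using BI(2,3) le[OF b] by (simp add: nn_integral_multc inner_diff_left)
  also have "\<dots> = (\<Prod>i\<in>Basis. (u - l) \<bullet> i)"
    using le by (simp add: prod_ennreal inner_diff_left)
  finally show "emeasure (distr lborel borel N) (box l u) = (\<Prod>i\<in>Basis. (u - l) \<bullet> i)"
    unfolding N_def .
qed simp

lemma emeasure_add_le_by_fibers_Basis:
  fixes b :: "'a::euclidean_space"
  assumes b: "b \<in> Basis"
    and X: "X1 \<in> sets borel" "X2 \<in> sets borel" and Y: "Y1 \<in> sets borel" "Y2 \<in> sets borel"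
    and fibers: "\<And>p. p \<bullet> b = 0 \<Longrightarrow>
      emeasure lborel {s. p + s *\<^sub>R b \<in> Y1} + emeasure lborel {s. p + s *\<^sub>R b \<in> Y2}
        \<le> emeasure lborel {s. p + s *\<^sub>R b \<in> X1} + emeasure lborel {s. p + s *\<^sub>R b \<in> X2}"
  shows "emeasure lborel Y1 + emeasure lborel Y2 \<le> emeasure lborel X1 + emeasure lborel X2"
proof -
  let ?e = "\<lambda>x. \<Sum>i\<in>Basis - {b}. x i *\<^sub>R i"
  have fiber_integral: "(\<integral>\<^sup>+s. indicator Z (p + s *\<^sub>R b) \<partial>lborel) = emeasure lborel {s. p + s *\<^sub>R b \<in> Z}"
    if [measurable]: "Z \<in> sets borel" for Z p
  proof -
    have "{s. p + s *\<^sub>R b \<in> Z} \<in> sets lborel"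
      by measurable
    then have "emeasure lborel {s. p + s *\<^sub>R b \<in> Z} = (\<integral>\<^sup>+s. indicator {s. p + s *\<^sub>R b \<in> Z} s \<partial>lborel)"
      by (rule nn_integral_indicator[symmetric])
    then show ?thesis
      by (simp add: indicator_def)
  qed
  have sum_by_fibers: "emeasure lborel X + emeasure lborel Y =
      (\<integral>\<^sup>+x. emeasure lborel {s. ?e x + s *\<^sub>R b \<in> X} + emeasure lborel {s. ?e x + s *\<^sub>R b \<in> Y}
        \<partial>(\<Pi>\<^sub>M i\<in>Basis - {b}. lborel))"
    if [measurable]: "X \<in> sets borel" "Y \<in> sets borel" for X Y
  proof -
    have "emeasure lborel X + emeasure lborel Y = (\<integral>\<^sup>+z. indicator X z + indicator Y z \<partial>lborel)"
      by (simp add: nn_integral_add)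
    also have "\<dots> = (\<integral>\<^sup>+x. (\<integral>\<^sup>+s. indicator X (?e x + s *\<^sub>R b) + indicator Y (?e x + s *\<^sub>R b) \<partial>lborel)
        \<partial>(\<Pi>\<^sub>M i\<in>Basis - {b}. lborel))"
      by (rule nn_integral_lborel_split_coordinate(1)[OF b]) simp
    also have "\<dots> = (\<integral>\<^sup>+x. emeasure lborel {s. ?e x + s *\<^sub>R b \<in> X} + emeasure lborel {s. ?e x + s *\<^sub>R b \<in> Y}
        \<partial>(\<Pi>\<^sub>M i\<in>Basis - {b}. lborel))"
      by (intro nn_integral_cong) (simp add: nn_integral_add fiber_integral)
    finally show ?thesis .
  qed
  have "?e x \<bullet> b = 0" for x
    using inner_Basis_split_coordinate[OF b b, of x 0] by simp
  then show ?thesis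
    unfolding sum_by_fibers[OF X] sum_by_fibers[OF Y] by (intro nn_integral_mono fibers) simp_all
qed

lemma emeasure_add_le_by_fibers:
  fixes v :: "'a::euclidean_space"
  assumes v: "v \<noteq> 0"
    and X[measurable]: "X1 \<in> sets borel" "X2 \<in> sets borel"
    and Y[measurable]: "Y1 \<in> sets borel" "Y2 \<in> sets borel"
    and fibers: "\<And>p. emeasure lborel {s. p + s *\<^sub>R v \<in> Y1} + emeasure lborel {s. p + s *\<^sub>R v \<in> Y2}
        \<le> emeasure lborel {s. p + s *\<^sub>R v \<in> X1} + emeasure lborel {s. p + s *\<^sub>R v \<in> X2}"
  shows "emeasure lborel Y1 + emeasure lborel Y2 \<le> emeasure lborel X1 + emeasure lborel X2"
proof -
  obtain b where b: "b \<in> Basis" "v \<bullet> b \<noteq> 0"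
    using v euclidean_all_zero_iff by blast
  define u where "u = v /\<^sub>R (v \<bullet> b)"
  \<comment> \<open>The shear N preserves Lebesgue measure and maps the line p + \<real> b onto p + \<real> u whenever
    p \<bullet> b = 0; the lines parallel to u and to v are the same, only with rescaled parameter.\<close>
  define N where "N = (\<lambda>z::'a. z + (z \<bullet> b) *\<^sub>R (u - b))"
  have ub: "(u - b) \<bullet> b = 0"
    using b by (simp add: u_def inner_diff_left)
  have N_measurable[measurable]: "N \<in> borel_measurable borel"
    unfolding N_def by measurable
  have N_preserves: "emeasure lborel (N -` Z) = emeasure lborel Z" if "Z \<in> sets borel" for Z
    using emeasure_distr[of N lborel borel Z] that unfolding lborel_distr_shear[OF b(1) ub, folded N_def]
    by simp
  have N_fiber: "{s. p + s *\<^sub>R b \<in> N -` Z} = {s. p + s *\<^sub>R u \<in> Z}" if "p \<bullet> b = 0" for p Z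
  proof -
    have "N (p + s *\<^sub>R b) = p + s *\<^sub>R u" for s
      using that b(1) by (simp add: N_def inner_add_left algebra_simps)
    then show ?thesis
      by simp
  qed
  have rescale: "emeasure lborel {s. p + s *\<^sub>R u \<in> Z} = ennreal \<bar>v \<bullet> b\<bar> * emeasure lborel {s. p + s *\<^sub>R v \<in> Z}"
    if [measurable]: "Z \<in> sets borel" for p Z
  proof -
    have [measurable]: "{s. p + s *\<^sub>R u \<in> Z} \<in> sets borel"
      by measurable
    have [measurable]: "{s. p + s *\<^sub>R v \<in> Z} \<in> sets borel"
      by measurable
    have "emeasure lborel {s. p + s *\<^sub>R u \<in> Z} = (\<integral>\<^sup>+s. indicator {s. p + s *\<^sub>R u \<in> Z} s \<partial>lborel)"
      by simp
    also have "\<dots> = \<bar>v \<bullet> b\<bar> * (\<integral>\<^sup>+s. indicator {s. p + s *\<^sub>R u \<in> Z} (0 + (v \<bullet> b) * s) \<partial>lborel)"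
      by (rule nn_integral_real_affine) (simp_all add: b(2))
    also have "(\<lambda>s. indicator {s. p + s *\<^sub>R u \<in> Z} (0 + (v \<bullet> b) * s)) = indicator {s. p + s *\<^sub>R v \<in> Z}"
      using b(2) by (simp add: u_def indicator_def fun_eq_iff field_simps)
    finally show ?thesis
      by simp
  qed
  have "emeasure lborel (N -` Y1) + emeasure lborel (N -` Y2) \<le> emeasure lborel (N -` X1) + emeasure lborel (N -` X2)"
  proof (rule emeasure_add_le_by_fibers_Basis[OF b(1)])
    fix p :: 'a
    assume "p \<bullet> b = 0"
    show "emeasure lborel {s. p + s *\<^sub>R b \<in> N -` Y1} + emeasure lborel {s. p + s *\<^sub>R b \<in> N -` Y2}
        \<le> emeasure lborel {s. p + s *\<^sub>R b \<in> N -` X1} + emeasure lborel {s. p + s *\<^sub>R b \<in> N -` X2}"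
      unfolding N_fiber[OF \<open>p \<bullet> b = 0\<close>] rescale[OF X(1)] rescale[OF X(2)] rescale[OF Y(1)] rescale[OF Y(2)]
        distrib_left[symmetric]
      by (rule mult_left_mono[OF fibers]) simp
  qed (auto intro: measurable_sets_borel[OF N_measurable])
  then show ?thesis
    by (simp add: N_preserves)
qed

section \<open>Minkowski sums with a segment\<close>

lemma emeasure_lborel_compact:
  "compact S \<Longrightarrow> emeasure lborel S = ennreal (measure lebesgue S)"
  by (simp add: emeasure_eq_measure2 fmeasurable_compact borel_compact)

lemma compact_set_plus:
  fixes S T :: "'a::real_normed_vector set"
  assumes "compact S" "compact T"
  shows "compact (S + T)"
proof -
  have "S + T = {x + y |x y. x \<in> S \<and> y \<in> T}"
    by (auto simp: set_plus_def)
  then show ?thesis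
    using compact_sums[OF assms] by simp
qed

lemma compact_line_fiber:
  fixes p v :: "'a::real_normed_vector"
  assumes v: "v \<noteq> 0" and Z: "compact Z"
  shows "compact {s. p + s *\<^sub>R v \<in> Z}"
proof -
  have "closed ((\<lambda>s. p + s *\<^sub>R v) -` Z)"
    by (intro continuous_closed_vimage compact_imp_closed Z continuous_intros)
  moreover obtain R where R: "\<And>z. z \<in> Z \<Longrightarrow> norm z \<le> R"
    using compact_imp_bounded[OF Z] by (auto simp: bounded_iff)
  have "\<bar>s\<bar> \<le> (R + norm p) / norm v" if "p + s *\<^sub>R v \<in> Z" for s
  proof -
    have "\<bar>s\<bar> * norm v \<le> norm (p + s *\<^sub>R v) + norm p"
      using norm_triangle_ineq4[of "p + s *\<^sub>R v" p] by simp
    then show ?thesis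
      using R[OF that] v by (simp add: field_simps)
  qed
  then have "bounded {s. p + s *\<^sub>R v \<in> Z}"
    by (auto simp: bounded_iff)
  ultimately show ?thesis
    by (simp add: compact_eq_bounded_closed vimage_def)
qed

lemma convex_line_fiber:
  fixes p v :: "'a::real_vector"
  assumes "convex Z"
  shows "convex {s. p + s *\<^sub>R v \<in> Z}"
proof -
  have "{s. p + s *\<^sub>R v \<in> Z} = (\<lambda>s. s *\<^sub>R v) -` ((+) (- p) ` Z)"
    by (force simp: algebra_simps)
  then show ?thesis
    using assms by (simp add: convex_linear_vimage convex_translation linear_scaleR_left)
qed

lemma line_fiber_plus_segment:
  fixes p v :: "'a::real_vector"
  shows "{s. p + s *\<^sub>R v \<in> Z + closed_segment 0 v} = {s. p + s *\<^sub>R v \<in> Z} + {0..1}"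
proof -
  have "(\<lambda>r. r *\<^sub>R v) ` closed_segment 0 1 = closed_segment (0 *\<^sub>R v) (1 *\<^sub>R v)"
    by (rule closed_segment_linear_image[symmetric]) (rule linear_scaleR_left)
  then have segment: "closed_segment 0 v = (\<lambda>r. r *\<^sub>R v) ` {0..1}"
    by (simp add: closed_segment_eq_real_ivl)
  have "p + s *\<^sub>R v = z + r *\<^sub>R v \<longleftrightarrow> p + (s - r) *\<^sub>R v = z" for s r z
    by (auto simp: algebra_simps)
  then show ?thesis
    unfolding segment set_plus_def by (auto intro!: exI[of _ "_ - _"])
qed

lemma emeasure_plus_Icc_ge_real:
  fixes K :: "real set"
  assumes K: "compact K" "K \<noteq> {}" and t: "t \<ge> 0"
  shows "emeasure lborel K + t \<le> emeasure lborel (K + {0..t})"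
proof -
  obtain m where m: "m \<in> K" "\<And>x. x \<in> K \<Longrightarrow> x \<le> m"
    using compact_attains_sup[OF K] by blast
  have covered: "K \<union> {m<..m+t} \<subseteq> K + {0..t}"
  proof safe
    fix x
    show "x \<in> K \<Longrightarrow> x \<in> K + {0..t}"
      using set_plus_intro[of x K 0 "{0..t}"] t by simp
    show "x \<in> {m<..m+t} \<Longrightarrow> x \<in> K + {0..t}"
      using set_plus_intro[OF m(1), of "x - m" "{0..t}"] by simp
  qed
  have "K \<inter> {m<..m+t} = {}"
    using m(2) by force
  then have "emeasure lborel K + t = emeasure lborel (K \<union> {m<..m+t})"
    using plus_emeasure[of K lborel "{m<..m+t}"] K(1) t by (simp add: borel_compact)
  also have "\<dots> \<le> emeasure lborel (K + {0..t})"
    using covered borel_compact[OF compact_set_plus[OF K(1) compact_Icc, of 0 t]] by (intro emeasure_mono) simp_all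
  finally show ?thesis .
qed

lemma emeasure_plus_Icc_le_real:
  fixes A K :: "real set"
  assumes t: "t \<ge> 0" and A: "compact A" "convex A" and K: "compact K" and AK: "A \<subseteq> K"
  shows "emeasure lborel (A + {0..t}) + emeasure lborel K
    \<le> emeasure lborel (K + {0..t}) + emeasure lborel A"
proof (cases "A = {}")
  case True
  have "K \<subseteq> K + {0..t}"
    using set_zero_plus2[of "{0..t}" K] t by (simp add: add.commute)
  then show ?thesis
    using True compact_set_plus[OF K compact_Icc]
    by (simp add: emeasure_mono borel_compact)
next
  case False
  then obtain a c where ac: "A = {a..c}" "a \<le> c"
    using connected_compact_interval_1[of A] A convex_connected by fastforce
  have "emeasure lborel (A + {0..t}) + emeasure lborel K = ennreal (c - a) + (emeasure lborel K + t)"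
    using ac t by (simp add: Icc_plus_Icc add_ac flip: ennreal_plus)
  also have "\<dots> \<le> ennreal (c - a) + emeasure lborel (K + {0..t})"
    using False AK by (intro add_left_mono emeasure_plus_Icc_ge_real K t) auto
  also have "\<dots> = emeasure lborel (K + {0..t}) + emeasure lborel A"
    using ac by (simp add: add.commute)
  finally show ?thesis .
qed

lemma measure_plus_segment_le:
  fixes A K :: "'a::euclidean_space set"
  assumes A: "compact A" "convex A" and K: "compact K" and AK: "A \<subseteq> K"
  shows "measure lebesgue (A + closed_segment 0 v) + measure lebesgue K
    \<le> measure lebesgue (K + closed_segment 0 v) + measure lebesgue A"
proof (cases "v = 0")
  case True
  then show ?thesis
    using A K AK by (simp add: measure_mono_fmeasurable lmeasurable_compact fmeasurableD)
next
  case False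
  have compact: "compact (A + closed_segment 0 v)" "compact (K + closed_segment 0 v)"
    using A K by (simp_all add: compact_set_plus)
  have "emeasure lborel (A + closed_segment 0 v) + emeasure lborel K
      \<le> emeasure lborel (K + closed_segment 0 v) + emeasure lborel A"
  proof (rule emeasure_add_le_by_fibers[OF False])
    fix p :: 'a
    show "emeasure lborel {s. p + s *\<^sub>R v \<in> A + closed_segment 0 v} + emeasure lborel {s. p + s *\<^sub>R v \<in> K}
      \<le> emeasure lborel {s. p + s *\<^sub>R v \<in> K + closed_segment 0 v} + emeasure lborel {s. p + s *\<^sub>R v \<in> A}"
      unfolding line_fiber_plus_segment using AK
      by (intro emeasure_plus_Icc_le_real compact_line_fiber convex_line_fiber False A K) auto
  qed (use A K compact in \<open>simp_all add: borel_compact\<close>)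
  then show ?thesis
    using A K compact by (simp add: emeasure_lborel_compact flip: ennreal_plus)
qed

lemma elt_set_plus_eq_image: "a +o S = (+) a ` S"
  by (auto simp: elt_set_plus_def)

lemma measure_elt_set_plus: "measure lebesgue (a +o S) = measure lebesgue (S :: 'a::euclidean_space set)"
  by (simp add: elt_set_plus_eq_image measure_translation)

lemma measure_supermodular_segment:
  fixes A C :: "'a::euclidean_space set"
  assumes A: "compact A" "convex A" and C: "compact C" "C \<noteq> {}"
  shows "measure lebesgue (A + closed_segment a c) + measure lebesgue (A + C)
    \<le> measure lebesgue (A + closed_segment a c + C) + measure lebesgue A"
proof -
  \<comment> \<open>After translating C to C' with 0 \<in> C', the set A is contained in K = A + C'.\<close>
  obtain c0 where "c0 \<in> C"
    using C by auto
  define C' where "C' = (- c0) +o C"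
  have C_eq: "C = c0 +o C'"
    by (simp add: C'_def set_plus_rearrange2)
  have "compact C'"
    using compact_translation[OF C(1), of "- c0"] by (simp add: C'_def elt_set_plus_eq_image)
  have "0 \<in> C'"
    using \<open>c0 \<in> C\<close> by (auto simp: C'_def elt_set_plus_def)
  have segment_eq: "closed_segment a c = a +o closed_segment 0 (c - a)"
    using closed_segment_translation[of a 0 "c - a"] by (auto simp: elt_set_plus_def)
  have "measure lebesgue (A + closed_segment 0 (c - a)) + measure lebesgue (A + C')
      \<le> measure lebesgue ((A + C') + closed_segment 0 (c - a)) + measure lebesgue A"
    using A \<open>compact C'\<close> set_zero_plus2[OF \<open>0 \<in> C'\<close>, of A]
    by (intro measure_plus_segment_le compact_set_plus) (auto simp: add.commute)
  then show ?thesis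
    unfolding C_eq segment_eq
    by (simp add: set_plus_rearrange3 set_plus_rearrange4 measure_elt_set_plus ac_simps)
qed

section \<open>Zonotopes and zonoids\<close>

lemma compact_set_sum:
  fixes S :: "'i \<Rightarrow> 'a::real_normed_vector set"
  assumes "\<And>i. i \<in> I \<Longrightarrow> compact (S i)"
  shows "compact (\<Sum>i\<in>I. S i)"
  using assms by (induction I rule: infinite_finite_induct) (auto simp: compact_set_plus)

lemma zonotope_iff_sum_segments:
  "zonotope Z \<longleftrightarrow> (\<exists>(k::nat) a b. Z = (\<Sum>i<k. closed_segment (a i) (b i)))"
  by (simp add: zonotope_def set_sum_alt Ball_def)

lemma
  fixes Z :: "'a::euclidean_space set"
  assumes "zonotope Z"
  shows compact_zonotope: "compact Z" and convex_zonotope: "convex Z" and zonotope_nonempty: "Z \<noteq> {}"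
proof -
  obtain k :: nat and a b where Z: "Z = (\<Sum>i<k. closed_segment (a i) (b i))"
    using assms by (auto simp: zonotope_iff_sum_segments)
  then show "compact Z" "convex Z"
    by (simp_all add: compact_set_sum convex_set_sum)
  have "(\<Sum>i<k. a i) \<in> Z"
    unfolding Z set_sum_alt[OF finite_lessThan] by auto
  then show "Z \<noteq> {}"
    by auto
qed

lemma measure_supermodular_zonotope:
  fixes A C Z :: "'a::euclidean_space set"
  assumes A: "compact A" "convex A" and C: "compact C" "C \<noteq> {}" and "zonotope Z"
  shows "measure lebesgue (A + Z) + measure lebesgue (A + C)
    \<le> measure lebesgue (A + Z + C) + measure lebesgue A"
proof -
  obtain k :: nat and a b where Z: "Z = (\<Sum>i<k. closed_segment (a i) (b i))"
    using \<open>zonotope Z\<close> by (auto simp: zonotope_iff_sum_segments)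
  show ?thesis
    unfolding Z using A
  proof (induction k arbitrary: A)
    case 0
    then show ?case
      by simp
  next
    case (Suc k)
    define Z' where "Z' = (\<Sum>i<k. closed_segment (a i) (b i))"
    have "compact (A + Z')" "convex (A + Z')"
      using Suc.prems by (simp_all add: Z'_def compact_set_plus compact_set_sum convex_set_plus convex_set_sum)
    then have "measure lebesgue (A + Z' + closed_segment (a k) (b k)) + measure lebesgue (A + Z' + C)
        \<le> measure lebesgue (A + Z' + closed_segment (a k) (b k) + C) + measure lebesgue (A + Z')"
      using C by (rule measure_supermodular_segment)
    moreover have "measure lebesgue (A + Z') + measure lebesgue (A + C)
        \<le> measure lebesgue (A + Z' + C) + measure lebesgue A"
      unfolding Z'_def using Suc by blast
    ultimately show ?case
      by (simp add: Z'_def add.assoc)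
  qed
qed

lemma hausdorff_dist_commute: "hausdorff_dist S T = hausdorff_dist T S"
  by (simp add: hausdorff_dist_def max.commute)

lemma subset_plus_cball_if_hausdorff_dist_less:
  fixes S T :: "'a::euclidean_space set"
  assumes S: "compact S" and T: "compact T" "T \<noteq> {}" and less: "hausdorff_dist S T < e"
  shows "S \<subseteq> T + cball 0 e"
proof
  fix y
  assume "y \<in> S"
  have "bdd_above ((\<lambda>y. infdist y T) ` S)"
    by (intro bounded_imp_bdd_above compact_imp_bounded compact_continuous_image S continuous_intros)
  then have "infdist y T \<le> hausdorff_dist S T"
    using \<open>y \<in> S\<close> unfolding hausdorff_dist_def by (meson cSUP_upper max.coboundedI1)
  moreover obtain p where "p \<in> T" "infdist y T = dist y p"
    using infdist_attains_inf[OF compact_imp_closed[OF T(1)] T(2)] by blast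
  ultimately have "p + (y - p) \<in> T + cball 0 e"
    using less by (intro set_plus_intro) (auto simp: dist_norm norm_minus_commute)
  then show "y \<in> T + cball 0 e"
    by simp
qed

lemma measure_plus_cball_tendsto:
  fixes X :: "'a::euclidean_space set"
  assumes X: "compact X" and r: "r \<ge> 0"
  shows "(\<lambda>m. measure lebesgue (X + cball 0 (r / Suc m))) \<longlonglongrightarrow> measure lebesgue X"
proof -
  define D where "D m = X + cball (0::'a) (r / Suc m)" for m
  have D_lmeasurable: "D m \<in> lmeasurable" for m
    unfolding D_def using X by (simp add: compact_set_plus lmeasurable_compact)
  then have range: "range D \<subseteq> sets lebesgue"
    by blast
  have finite: "emeasure lebesgue (D m) \<noteq> \<infinity>" for m
    using fmeasurableD2[OF D_lmeasurable] by (metis infinity_ennreal_def)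
  have "decseq D"
  proof (rule decseq_SucI)
    fix m
    have "r / Suc (Suc m) \<le> r / Suc m"
      using r by (intro divide_left_mono) auto
    then show "D (Suc m) \<subseteq> D m"
      unfolding D_def by (intro set_plus_mono2 subset_cball) auto
  qed
  then have "(\<lambda>m. measure lebesgue (D m)) \<longlonglongrightarrow> measure lebesgue (\<Inter>m. D m)"
    using range finite by (intro Lim_measure_decseq)
  moreover have "(\<Inter>m. D m) = X"
  proof
    have "x + 0 \<in> D m" if "x \<in> X" for x m
      unfolding D_def using that r by (intro set_plus_intro) auto
    then show "X \<subseteq> (\<Inter>m. D m)"
      by auto
    show "(\<Inter>m. D m) \<subseteq> X"
    proof
      fix y
      assume y: "y \<in> (\<Inter>m. D m)"
      have "\<exists>x\<in>X. dist x y < e" if "e > 0" for e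
      proof -
        obtain m :: nat where "r / e < m"
          using reals_Archimedean2 by blast
        then have "r / Suc m < e"
          using that r by (simp add: field_simps)
        have "y \<in> D m"
          using y by blast
        then obtain x z where "y = x + z" "x \<in> X" "z \<in> cball 0 (r / Suc m)"
          unfolding D_def by (rule set_plus_elim)
        then show ?thesis
          using \<open>r / Suc m < e\<close> by (intro bexI[of _ x]) (auto simp: dist_norm)
      qed
      then have "y \<in> closure X"
        by (simp add: closure_approachable)
      then show "y \<in> X"
        using X by (simp add: compact_imp_closed)
    qed
  qed
  ultimately show ?thesis
    by (simp add: D_def)
qed

lemma cball_plus_cball_subset:
  fixes e d :: real
  shows "cball (0::'a::real_normed_vector) e + cball 0 d \<subseteq> cball 0 (e + d)"
  using norm_triangle_mono by (fastforce elim: set_plus_elim)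

lemma measure_supermodular_zonoid_approx:
  fixes A B C :: "'a::euclidean_space set"
  assumes A: "compact A" "convex A" and "zonoid B" and C: "compact C" "C \<noteq> {}" and e: "e > 0"
  shows "measure lebesgue (A + B) + measure lebesgue (A + C)
    \<le> measure lebesgue (A + B + C + cball 0 (2 * e)) + measure lebesgue (A + cball 0 e)"
proof -
  obtain Ps where B: "compact B" "B \<noteq> {}" and Ps: "\<And>k. zonotope (Ps k)"
    and lim: "(\<lambda>k. hausdorff_dist (Ps k) B) \<longlonglongrightarrow> 0"
    using \<open>zonoid B\<close> unfolding zonoid_def by blast
  obtain k where close: "hausdorff_dist (Ps k) B < e"
    using order_tendstoD(2)[OF lim e] by (auto simp: eventually_sequentially)
  define P where "P = Ps k"
  have P: "zonotope P" "compact P" "convex P" "P \<noteq> {}"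
    using Ps compact_zonotope convex_zonotope zonotope_nonempty by (auto simp: P_def)
  have "B \<subseteq> P + cball 0 e"
    using close by (intro subset_plus_cball_if_hausdorff_dist_less B P) (simp add: P_def hausdorff_dist_commute)
  have "P \<subseteq> B + cball 0 e"
    using close by (intro subset_plus_cball_if_hausdorff_dist_less B P) (simp add: P_def)
  define A' where "A' = A + cball 0 e"
  have A': "compact A'" "convex A'"
    using A by (simp_all add: A'_def compact_set_plus convex_set_plus)
  have mono: "measure lebesgue S \<le> measure lebesgue T" if "S \<subseteq> T" "compact S" "compact T" for S T :: "'a set"
    using that by (intro measure_mono_fmeasurable) (auto intro: lmeasurable_compact fmeasurableD)
  have "measure lebesgue (A + B) \<le> measure lebesgue (A' + P)"
  proof (rule mono)
    have "A + B \<subseteq> A + (P + cball 0 e)"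
      using \<open>B \<subseteq> P + cball 0 e\<close> by (intro set_plus_mono2) auto
    then show "A + B \<subseteq> A' + P"
      by (simp add: A'_def ac_simps)
  qed (use A A' B P in \<open>simp_all add: compact_set_plus\<close>)
  moreover have "measure lebesgue (A + C) \<le> measure lebesgue (A' + C)"
  proof (rule mono)
    show "A + C \<subseteq> A' + C"
      unfolding A'_def using e set_zero_plus2[of "cball 0 e" A] by (intro set_plus_mono2) (auto simp: add.commute)
  qed (use A A' C in \<open>simp_all add: compact_set_plus\<close>)
  moreover have "measure lebesgue (A' + P + C) \<le> measure lebesgue (A + B + C + cball 0 (2 * e))"
  proof (rule mono)
    have "A' + P + C = (A + C) + (cball 0 e + P)"
      by (simp add: A'_def ac_simps)
    also have "\<dots> \<subseteq> (A + C) + (cball 0 e + (B + cball 0 e))"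
      using \<open>P \<subseteq> B + cball 0 e\<close> by (intro set_plus_mono2) auto
    also have "\<dots> = (A + B + C) + (cball 0 e + cball 0 e)"
      by (simp add: ac_simps)
    also have "\<dots> \<subseteq> A + B + C + cball 0 (2 * e)"
      using cball_plus_cball_subset[of e e] by (intro set_plus_mono2) auto
    finally show "A' + P + C \<subseteq> A + B + C + cball 0 (2 * e)" .
  qed (use A A' B C P in \<open>simp_all add: compact_set_plus\<close>)
  moreover have "measure lebesgue (A' + P) + measure lebesgue (A' + C) \<le> measure lebesgue (A' + P + C) + measure lebesgue A'"
    using A' C P(1) by (rule measure_supermodular_zonotope)
  ultimately show ?thesis
    unfolding A'_def by linarith
qed

theorem theorem3p12:
  fixes A B C :: "'a::euclidean_space set"
  assumes "compact A" and "convex A"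
    and "zonoid B"
    and "compact C" and "C \<noteq> {}"
  shows "measure lebesgue (A + B + C) + measure lebesgue A
           \<ge> measure lebesgue (A + B) + measure lebesgue (A + C)"
proof -
  have "compact (A + B + C)"
    using assms by (simp add: zonoid_def compact_set_plus)
  then have lim: "(\<lambda>m. measure lebesgue (A + B + C + cball 0 (2 / Suc m)) + measure lebesgue (A + cball 0 (1 / Suc m)))
      \<longlonglongrightarrow> measure lebesgue (A + B + C) + measure lebesgue A"
    using assms by (intro tendsto_add measure_plus_cball_tendsto) simp_all
  have bound: "measure lebesgue (A + B) + measure lebesgue (A + C)
      \<le> measure lebesgue (A + B + C + cball 0 (2 / Suc m)) + measure lebesgue (A + cball 0 (1 / Suc m))" for m
    using measure_supermodular_zonoid_approx[OF assms, of "1 / Suc m"] by simp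
  show ?thesis
    by (rule LIMSEQ_le_const[OF lim]) (use bound in blast)
qed

end
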